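(* Let $(X,X')$ and $(Y,Y')$ be two Banach couples and let $A\colon X\to Y$ be a bounded linear operator. If there exists an adversarial sequence for $A$ relative to $X'$ and $Y'$, then there exists an adversarial perturbation for $A$ relative to $X'$ and $Y'$.
   Context: A Banach couple is a pair of Banach spaces each of which is continuously embedded in a common Hausdorff topological vector space; set operations such as $X\cap X'$ are taken inside this ambient space via the embeddings. For $z$ in the ambient space of $(Y,Y')$, set $\|z\|_{Y'}=\infty$ if $z\notin Y'$. Given Banach couples $(X,X')$, $(Y,Y')$ and a bounded linear $A\colon X\to Y$: (i) an element $r\in X\cap X'$ is an adversarial perturbation for $A$ (relative to $X'$ and $Y'$) if $Ar\notin Y'$, i.e. $\|Ar\|_{Y'}=\infty$; (ii) a sequence $(r_n)_{n\in\mathbb{N}}$ in $X\cap X'$ is an adversarial sequence for $A$ (relative to $X'$ and $Y'$) if $(r_n)$ is bounded in both $X$ and $X'$ while $(Ar_n)$ is unbounded in $Y'$ (i.e. $\sup_n \|Ar_n\|_{Y'}=\infty$). *)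

theory Defs
  imports "HOL-Analysis.Analysis"
begin

definition hausdorff_tvs :: "'v::{real_vector,t2_space} itself \<Rightarrow> bool" where
  "hausdorff_tvs _ \<longleftrightarrow>
     continuous_on UNIV (\<lambda>p::'v \<times> 'v. fst p + snd p) \<and>
     continuous_on UNIV (\<lambda>p::real \<times> 'v. fst p *\<^sub>R snd p)"

definition cont_embedding :: "('x::banach \<Rightarrow> 'v::{real_vector,t2_space}) \<Rightarrow> bool" where
  "cont_embedding j \<longleftrightarrow> linear j \<and> inj j \<and> continuous_on UNIV j"

text \<open>Banach couple (X, X'), realised by the embeddings jX, jX' into the ambient space.\<close>
definition banach_couple ::
  "('x::banach \<Rightarrow> 'v::{real_vector,t2_space}) \<Rightarrow> ('x2::banach \<Rightarrow> 'v) \<Rightarrow> bool" where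
  "banach_couple jX jX' \<longleftrightarrow> hausdorff_tvs TYPE('v) \<and> cont_embedding jX \<and> cont_embedding jX'"

definition emb_norm :: "('x::banach \<Rightarrow> 'v) \<Rightarrow> 'v \<Rightarrow> ereal" where
  "emb_norm j z = (if z \<in> range j then ereal (norm (inv j z)) else \<infinity>)"

text \<open>Adversarial perturbation: r in X \<inter> X' (r given as an element of X whose image lies
  in X') with A r not in Y'.\<close>
definition adversarial_perturbation ::
  "('x::banach \<Rightarrow> 'v) \<Rightarrow> ('x2::banach \<Rightarrow> 'v) \<Rightarrow> ('y::banach \<Rightarrow> 'w) \<Rightarrow> ('y2::banach \<Rightarrow> 'w)
    \<Rightarrow> ('x \<Rightarrow> 'y) \<Rightarrow> 'x \<Rightarrow> bool" where
  "adversarial_perturbation jX jX' jY jY' A r \<longleftrightarrow>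
     jX r \<in> range jX' \<and> jY (A r) \<notin> range jY'"

definition adversarial_sequence ::
  "('x::banach \<Rightarrow> 'v) \<Rightarrow> ('x2::banach \<Rightarrow> 'v) \<Rightarrow> ('y::banach \<Rightarrow> 'w) \<Rightarrow> ('y2::banach \<Rightarrow> 'w)
    \<Rightarrow> ('x \<Rightarrow> 'y) \<Rightarrow> (nat \<Rightarrow> 'x) \<Rightarrow> bool" where
  "adversarial_sequence jX jX' jY jY' A r \<longleftrightarrow>
     (\<forall>n. jX (r n) \<in> range jX') \<and>
     (\<exists>C. \<forall>n. norm (r n) \<le> C) \<and>
     (\<exists>C. \<forall>n. emb_norm jX' (jX (r n)) \<le> ereal C) \<and>
     (SUP n. emb_norm jY' (jY (A (r n)))) = \<infinity>"

end

(* If A had no adversarial perturbation, it would map X \<inter> X' into Y'. This map has a closed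
   graph, since convergence in X, X' and Y' implies convergence in the Hausdorff ambient spaces,
   so by the closed graph theorem it is bounded from X \<inter> X' to Y': then no sequence bounded in
   X and X' can have images unbounded in Y'.
   The closed graph theorem is proved for maps on a closed subspace S of a Banach space. By
   Baire, some sublevel set of norm (f x) is dense in a ball of S, so every z \<in> S is approximated
   arbitrarily well by some w with norm (f w) \<le> M * norm z; approximating the successive
   remainders gives a series for z whose images converge absolutely, and closedness of the graph
   identifies their sum with f z, so norm (f z) \<le> 2 * M * norm z. *)

theory Submission
  imports Defs
begin

lemma Baire_closure_contains_ball:
  fixes S :: "'a::complete_space set"
  assumes "closed S" and "S \<noteq> {}" and "S \<subseteq> (\<Union>k::nat. E k)"
  obtains k p \<delta> where "p \<in> S" and "\<delta> > 0" and "S \<inter> ball p \<delta> \<subseteq> closure (E k)"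
proof -
  have "\<exists>k. top_of_set S interior_of (S \<inter> closure (E k)) \<noteq> {}"
  proof (rule ccontr)
    assume "\<nexists>k. top_of_set S interior_of (S \<inter> closure (E k)) \<noteq> {}"
    then have "top_of_set S interior_of (\<Union>k. S \<inter> closure (E k)) = {}"
      using \<open>closed S\<close>
      by (intro Baire_category_alt)
        (auto simp: completely_metrizable_space_closedin completely_metrizable_space_euclidean
          closedin_closed_Int)
    moreover have "(\<Union>k. S \<inter> closure (E k)) = S"
      using assms(3) closure_subset by blast
    ultimately show False
      using \<open>S \<noteq> {}\<close> interior_of_topspace[of "top_of_set S"] by simp
  qed
  then obtain k p where "p \<in> top_of_set S interior_of (S \<inter> closure (E k))"
    by blast
  then obtain U where "openin (top_of_set S) U" "p \<in> U" "U \<subseteq> S \<inter> closure (E k)"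
    unfolding interior_of_def by blast
  then obtain \<delta> where "\<delta> > 0" "ball p \<delta> \<inter> S \<subseteq> U"
    by (meson openin_contains_ball)
  then show thesis
    using that[of p \<delta> k] \<open>p \<in> U\<close> \<open>U \<subseteq> S \<inter> closure (E k)\<close> by blast
qed

locale linear_closed_graph_on =
  fixes S :: "'a::banach set" and f :: "'a \<Rightarrow> 'b::banach"
  assumes closed_domain: "closed S"
    and subspace_domain: "subspace S"
    and additive: "\<And>x y. x \<in> S \<Longrightarrow> y \<in> S \<Longrightarrow> f (x + y) = f x + f y"
    and homogeneous: "\<And>c x. x \<in> S \<Longrightarrow> f (c *\<^sub>R x) = c *\<^sub>R f x"
    and closed_graph: "closed ((\<lambda>x. (x, f x)) ` S)"
begin

lemma zero: "f 0 = 0"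
  using homogeneous[OF subspace_0[OF subspace_domain], of 0] by simp

lemma diff:
  assumes "x \<in> S" and "y \<in> S"
  shows "f (x - y) = f x - f y"
  using additive[of x "- y"] homogeneous[of y "-1"] assms subspace_neg[OF subspace_domain]
  by simp

lemma sum: "(\<And>j. j \<in> I \<Longrightarrow> w j \<in> S) \<Longrightarrow> f (\<Sum>j\<in>I. w j) = (\<Sum>j\<in>I. f (w j))"
proof (induction I rule: infinite_finite_induct)
  case (insert j I)
  have "(\<Sum>j\<in>I. w j) \<in> S"
    using insert.prems by (auto intro: subspace_sum[OF subspace_domain])
  then show ?case
    using insert additive by simp
qed (simp_all add: zero)

lemma graph_limit:
  assumes "\<And>n. s n \<in> S" and "s \<longlonglongrightarrow> x" and "(\<lambda>n. f (s n)) \<longlonglongrightarrow> y"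
  shows "f x = y"
proof -
  have "(\<lambda>n. (s n, f (s n))) \<longlonglongrightarrow> (x, y)"
    using assms by (intro tendsto_Pair)
  then have "(x, y) \<in> (\<lambda>x. (x, f x)) ` S"
    by (rule closed_sequentially[OF closed_graph, rotated]) (use assms(1) in auto)
  then show ?thesis
    by auto
qed

text \<open>z is approximated by u - v with u near p + z and v near p, both in the sublevel set.\<close>
lemma approximable_near_zero:
  assumes dense: "S \<inter> ball p \<delta> \<subseteq> closure {x \<in> S. norm (f x) \<le> k}"
    and "p \<in> S" and "z \<in> S" and "norm z < \<delta>" and "\<epsilon> > 0"
  shows "\<exists>w\<in>S. norm (z - w) < \<epsilon> \<and> norm (f w) \<le> 2 * k"
proof -
  have "\<delta> > 0"
    using norm_ge_zero[of z] \<open>norm z < \<delta>\<close> by linarith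
  have approach: "\<exists>u\<in>S. norm (f u) \<le> k \<and> dist u q < \<epsilon> / 2" if "q \<in> S \<inter> ball p \<delta>" for q
  proof -
    have "q \<in> closure {x \<in> S. norm (f x) \<le> k}"
      using dense that by blast
    then show ?thesis
      using \<open>\<epsilon> > 0\<close> unfolding closure_approachable by (metis (mono_tags) half_gt_zero mem_Collect_eq)
  qed
  have "p + z \<in> S \<inter> ball p \<delta>" and "p \<in> S \<inter> ball p \<delta>"
    using assms \<open>\<delta> > 0\<close> subspace_add[OF subspace_domain] by (auto simp: dist_norm)
  then obtain u v where u: "u \<in> S" "norm (f u) \<le> k" "dist u (p + z) < \<epsilon> / 2"
    and v: "v \<in> S" "norm (f v) \<le> k" "dist v p < \<epsilon> / 2"
    using approach by meson
  have "norm (z - (u - v)) \<le> dist v p + dist u (p + z)"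
    using norm_triangle_ineq4[of "v - p" "u - (p + z)"] by (simp add: dist_norm algebra_simps)
  moreover have "norm (f (u - v)) \<le> norm (f u) + norm (f v)"
    using diff[OF u(1) v(1)] norm_triangle_ineq4 by simp
  ultimately show ?thesis
    using u v subspace_diff[OF subspace_domain u(1) v(1)] by (intro bexI[of _ "u - v"]) auto
qed

lemma approximable_if_dense_sublevel:
  assumes dense: "S \<inter> ball p \<delta> \<subseteq> closure {x \<in> S. norm (f x) \<le> k}"
    and "p \<in> S" and "\<delta> > 0" and "z \<in> S" and "\<epsilon> > 0"
  shows "\<exists>w\<in>S. norm (z - w) < \<epsilon> \<and> norm (f w) \<le> 4 * k / \<delta> * norm z"
proof (cases "z = 0")
  case True
  then show ?thesis
    using subspace_0[OF subspace_domain] zero \<open>\<epsilon> > 0\<close> by (intro bexI[of _ 0]) auto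
next
  case False
  define l where "l = \<delta> / (2 * norm z)"
  have "l > 0"
    using False \<open>\<delta> > 0\<close> by (simp add: l_def)
  have "norm (l *\<^sub>R z) < \<delta>"
    using False \<open>\<delta> > 0\<close> by (simp add: l_def)
  moreover have "l *\<^sub>R z \<in> S" and "l * \<epsilon> > 0"
    using subspace_scale[OF subspace_domain \<open>z \<in> S\<close>] \<open>l > 0\<close> \<open>\<epsilon> > 0\<close> by auto
  ultimately obtain w where "w \<in> S" and w_close: "norm (l *\<^sub>R z - w) < l * \<epsilon>"
    and w_bound: "norm (f w) \<le> 2 * k"
    using approximable_near_zero[OF dense \<open>p \<in> S\<close>] by blast
  have "z - inverse l *\<^sub>R w = inverse l *\<^sub>R (l *\<^sub>R z - w)"
    using \<open>l > 0\<close> by (simp add: scaleR_diff_right)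
  then have "norm (z - inverse l *\<^sub>R w) = norm (l *\<^sub>R z - w) / l"
    using \<open>l > 0\<close> by (simp add: divide_inverse_commute)
  also have "\<dots> < \<epsilon>"
    using w_close \<open>l > 0\<close> by (simp add: divide_less_eq mult.commute)
  finally have "norm (z - inverse l *\<^sub>R w) < \<epsilon>" .
  moreover have "norm (f (inverse l *\<^sub>R w)) = norm (f w) / l"
    using homogeneous[OF \<open>w \<in> S\<close>] \<open>l > 0\<close> by (simp add: divide_inverse_commute)
  moreover have "norm (f w) / l \<le> 4 * k / \<delta> * norm z"
    using w_bound \<open>l > 0\<close> False \<open>\<delta> > 0\<close> by (simp add: l_def field_simps)
  ultimately show ?thesis
    using subspace_scale[OF subspace_domain \<open>w \<in> S\<close>] by (intro bexI[of _ "inverse l *\<^sub>R w"]) auto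
qed

lemma approximately_bounded:
  obtains M where "M \<ge> 0"
    and "\<And>z \<epsilon>. z \<in> S \<Longrightarrow> \<epsilon> > 0 \<Longrightarrow> \<exists>w\<in>S. norm (z - w) < \<epsilon> \<and> norm (f w) \<le> M * norm z"
proof -
  have "S \<noteq> {}"
    using subspace_0[OF subspace_domain] by blast
  moreover have "S \<subseteq> (\<Union>k::nat. {x \<in> S. norm (f x) \<le> real k})"
    using real_nat_ceiling_ge by blast
  ultimately obtain k p \<delta> where "p \<in> S" "\<delta> > 0"
    and dense: "S \<inter> ball p \<delta> \<subseteq> closure {x \<in> S. norm (f x) \<le> real k}"
    by (rule Baire_closure_contains_ball[OF closed_domain, where E = "\<lambda>k. {x \<in> S. norm (f x) \<le> real k}"])
  then show thesis
    using that[of "4 * real k / \<delta>"] approximable_if_dense_sublevel by simp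
qed

lemma halving_remainders:
  assumes approx: "\<And>z \<epsilon>. z \<in> S \<Longrightarrow> \<epsilon> > 0 \<Longrightarrow> \<exists>w\<in>S. norm (z - w) < \<epsilon> \<and> norm (f w) \<le> M * norm z"
    and "s \<in> S" and "s \<noteq> 0"
  obtains e w where "e 0 = s" and "\<And>j. e (Suc j) = e j - w j" and "\<And>j. w j \<in> S"
    and "\<And>j. norm (e j) \<le> norm s * (1/2) ^ j" and "\<And>j. norm (f (w j)) \<le> M * norm (e j)"
proof -
  obtain W where W: "\<And>z \<epsilon>. z \<in> S \<Longrightarrow> \<epsilon> > 0 \<Longrightarrow>
      W z \<epsilon> \<in> S \<and> norm (z - W z \<epsilon>) < \<epsilon> \<and> norm (f (W z \<epsilon>)) \<le> M * norm z"
    using approx by metis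
  define \<epsilon> where "\<epsilon> j = norm s * (1/2) ^ Suc j" for j :: nat
  have \<epsilon>_pos: "\<epsilon> j > 0" for j
    using \<open>s \<noteq> 0\<close> by (simp add: \<epsilon>_def)
  define e where "e = rec_nat s (\<lambda>j r. r - W r (\<epsilon> j))"
  define w where "w j = W (e j) (\<epsilon> j)" for j
  have e_0: "e 0 = s" and e_Suc: "e (Suc j) = e j - w j" for j
    by (simp_all add: e_def w_def)
  have e_in: "e j \<in> S" for j
  proof (induction j)
    case 0
    then show ?case
      using \<open>s \<in> S\<close> e_0 by simp
  next
    case (Suc j)
    then show ?case
      using W[OF Suc \<epsilon>_pos] e_Suc subspace_diff[OF subspace_domain] by (simp add: w_def)
  qed
  have "w j \<in> S" and e_Suc_small: "norm (e (Suc j)) < \<epsilon> j"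
    and "norm (f (w j)) \<le> M * norm (e j)" for j
    using W[OF e_in \<epsilon>_pos] by (simp_all add: w_def e_Suc)
  moreover have "norm (e j) \<le> norm s * (1/2) ^ j" for j
  proof (cases j)
    case (Suc i)
    then show ?thesis
      using e_Suc_small[of i] by (simp add: \<epsilon>_def)
  qed (simp add: e_0)
  ultimately show thesis
    using that e_0 e_Suc by blast
qed

lemma approximating_series:
  assumes "M \<ge> 0"
    and approx: "\<And>z \<epsilon>. z \<in> S \<Longrightarrow> \<epsilon> > 0 \<Longrightarrow> \<exists>w\<in>S. norm (z - w) < \<epsilon> \<and> norm (f w) \<le> M * norm z"
    and "s \<in> S"
  obtains w where "\<And>j. w j \<in> S" and "(\<lambda>n. \<Sum>j<n. w j) \<longlonglongrightarrow> s"
    and "\<And>j. norm (f (w j)) \<le> M * norm s * (1/2) ^ j"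
proof (cases "s = 0")
  case True
  then show thesis
    using that[of "\<lambda>_. 0"] subspace_0[OF subspace_domain] zero by simp
next
  case False
  obtain e w where e_0: "e 0 = s" and e_Suc: "\<And>j. e (Suc j) = e j - w j" and w_in: "\<And>j. w j \<in> S"
    and e_small: "\<And>j. norm (e j) \<le> norm s * (1/2) ^ j"
    and w_bound: "\<And>j. norm (f (w j)) \<le> M * norm (e j)"
    using halving_remainders[OF approx \<open>s \<in> S\<close> False] by blast
  have partial_sums: "(\<Sum>j<n. w j) = s - e n" for n
    by (induction n) (simp_all add: e_0 e_Suc)
  have "(\<lambda>n. norm s * (1/2::real) ^ n) \<longlonglongrightarrow> 0"
    by (intro tendsto_mult_right_zero LIMSEQ_power_zero) simp
  then have "e \<longlonglongrightarrow> 0"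
    by (rule Lim_null_comparison[rotated]) (simp add: e_small)
  then have "(\<lambda>n. \<Sum>j<n. w j) \<longlonglongrightarrow> s"
    unfolding partial_sums using tendsto_diff[OF tendsto_const[of s]] by fastforce
  moreover have "norm (f (w j)) \<le> M * norm s * (1/2) ^ j" for j
    using w_bound[of j] mult_left_mono[OF e_small[of j] \<open>M \<ge> 0\<close>] by (simp add: mult.assoc)
  ultimately show thesis
    using that w_in by blast
qed

lemma norm_le_if_approximately_bounded:
  assumes "M \<ge> 0"
    and "\<And>z \<epsilon>. z \<in> S \<Longrightarrow> \<epsilon> > 0 \<Longrightarrow> \<exists>w\<in>S. norm (z - w) < \<epsilon> \<and> norm (f w) \<le> M * norm z"
    and "s \<in> S"
  shows "norm (f s) \<le> 2 * M * norm s"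
proof -
  obtain w where w_in: "\<And>j. w j \<in> S" and w_sums: "(\<lambda>n. \<Sum>j<n. w j) \<longlonglongrightarrow> s"
    and w_bound: "\<And>j. norm (f (w j)) \<le> M * norm s * (1/2) ^ j"
    using approximating_series[OF assms] by metis
  have geometric: "summable (\<lambda>j. M * norm s * (1/2::real) ^ j)"
    by (intro summable_mult summable_geometric) simp
  have norms: "summable (\<lambda>j. norm (f (w j)))"
    using w_bound by (intro summable_comparison_test[OF _ geometric]) auto
  have partial_sums_in: "(\<Sum>j<n. w j) \<in> S" for n
    using w_in by (simp add: subspace_sum[OF subspace_domain])
  have "(\<lambda>n. f (\<Sum>j<n. w j)) \<longlonglongrightarrow> (\<Sum>j. f (w j))"
    using summable_LIMSEQ[OF summable_norm_cancel[OF norms]] by (simp add: sum w_in)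
  then have "f s = (\<Sum>j. f (w j))"
    by (rule graph_limit[OF partial_sums_in w_sums])
  then have "norm (f s) \<le> (\<Sum>j. norm (f (w j)))"
    using summable_norm[OF norms] by simp
  also have "\<dots> \<le> (\<Sum>j. M * norm s * (1/2) ^ j)"
    by (rule suminf_le[OF w_bound norms geometric])
  also have "\<dots> = 2 * M * norm s"
    using suminf_geometric[of "1/2::real"] by (simp add: suminf_mult)
  finally show ?thesis .
qed

theorem closed_graph_theorem:
  obtains K where "K \<ge> 0" and "\<And>x. x \<in> S \<Longrightarrow> norm (f x) \<le> K * norm x"
proof (rule approximately_bounded)
  fix M
  assume "M \<ge> 0"
    and "\<And>z \<epsilon>. z \<in> S \<Longrightarrow> \<epsilon> > 0 \<Longrightarrow> \<exists>w\<in>S. norm (z - w) < \<epsilon> \<and> norm (f w) \<le> M * norm z"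
  then show thesis
    using that[of "2 * M"] norm_le_if_approximately_bounded by simp
qed

end

lemma emb_norm_of_range: "z \<in> range j \<Longrightarrow> emb_norm j z = ereal (norm (inv j z))"
  by (simp add: emb_norm_def)

lemma closed_subspace_intersection:
  assumes "banach_couple jX jX'"
  shows "closed {p. jX (fst p) = jX' (snd p)}" and "subspace {p. jX (fst p) = jX' (snd p)}"
proof -
  have "linear jX" "linear jX'" "continuous_on UNIV jX" "continuous_on UNIV jX'"
    using assms by (auto simp: banach_couple_def cont_embedding_def)
  then show "closed {p. jX (fst p) = jX' (snd p)}" and "subspace {p. jX (fst p) = jX' (snd p)}"
    by (auto intro!: closed_Collect_eq continuous_on_compose2[of UNIV jX] continuous_on_compose2[of UNIV jX']
        continuous_intros simp: subspace_def linear_add linear_scale linear_0)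
qed

text \<open>X \<inter> X' is modelled as the closed subspace of pairs (x, x') of X \<times> X' with
  jX x = jX' x'; the norm of X \<times> X' is equivalent to the intersection norm.\<close>
lemma linear_closed_graph_on_intersection:
  fixes jX :: "'x::banach \<Rightarrow> 'v::{real_vector,t2_space}"
    and jX' :: "'x2::banach \<Rightarrow> 'v"
    and jY :: "'y::banach \<Rightarrow> 'w::{real_vector,t2_space}"
    and jY' :: "'y2::banach \<Rightarrow> 'w"
    and A :: "'x \<Rightarrow> 'y"
  assumes "banach_couple jX jX'" and "banach_couple jY jY'" and "bounded_linear A"
    and no_perturbation: "\<And>x. jX x \<in> range jX' \<Longrightarrow> jY (A x) \<in> range jY'"
  shows "linear_closed_graph_on {p. jX (fst p) = jX' (snd p)} (\<lambda>p. inv jY' (jY (A (fst p))))"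
    (is "linear_closed_graph_on ?S ?B")
proof
  have "linear jY" "linear jY'" "inj jY'" "linear A"
    and continuous: "continuous_on UNIV jX" "continuous_on UNIV jX'" "continuous_on UNIV jY"
      "continuous_on UNIV jY'" "continuous_on UNIV A"
    using assms(1-3) by (auto simp: banach_couple_def cont_embedding_def linear_continuous_on
        bounded_linear.linear)
  note linear = \<open>linear jY\<close> \<open>linear jY'\<close> \<open>linear A\<close>
  have B_eq_iff: "?B p = y \<longleftrightarrow> jY' y = jY (A (fst p))" if "p \<in> ?S" for p y
    using that no_perturbation[of "fst p"] \<open>inj jY'\<close> by (auto simp: f_inv_into_f injD)
  show "closed ?S" and "subspace ?S"
    using closed_subspace_intersection[OF assms(1)] by auto
  show "?B (p + q) = ?B p + ?B q" if "p \<in> ?S" "q \<in> ?S" for p q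
  proof -
    have "jY' (?B p + ?B q) = jY (A (fst (p + q)))"
      using B_eq_iff[OF that(1), of "?B p"] B_eq_iff[OF that(2), of "?B q"] linear
      by (simp add: linear_add)
    then show ?thesis
      using B_eq_iff subspace_add[OF \<open>subspace ?S\<close> that] by blast
  qed
  show "?B (c *\<^sub>R p) = c *\<^sub>R ?B p" if "p \<in> ?S" for c p
  proof -
    have "jY' (c *\<^sub>R ?B p) = jY (A (fst (c *\<^sub>R p)))"
      using B_eq_iff[OF that, of "?B p"] linear by (simp add: linear_scale)
    then show ?thesis
      using B_eq_iff subspace_scale[OF \<open>subspace ?S\<close> that] by blast
  qed
  have "(\<lambda>p. (p, ?B p)) ` ?S =
      {z. jX (fst (fst z)) = jX' (snd (fst z)) \<and> jY' (snd z) = jY (A (fst (fst z)))}"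
    using B_eq_iff by (force simp: image_iff)
  then show "closed ((\<lambda>p. (p, ?B p)) ` ?S)"
    using continuous
    by (auto intro!: closed_Collect_conj closed_Collect_eq continuous_intros
        continuous_on_compose2[of UNIV jX] continuous_on_compose2[of UNIV jX']
        continuous_on_compose2[of UNIV jY] continuous_on_compose2[of UNIV jY']
        continuous_on_compose2[of UNIV A])
qed

lemma bounded_on_intersection_if_no_adversarial_perturbation:
  fixes jX :: "'x::banach \<Rightarrow> 'v::{real_vector,t2_space}"
    and jX' :: "'x2::banach \<Rightarrow> 'v"
    and jY :: "'y::banach \<Rightarrow> 'w::{real_vector,t2_space}"
    and jY' :: "'y2::banach \<Rightarrow> 'w"
    and A :: "'x \<Rightarrow> 'y"
  assumes "banach_couple jX jX'" and "banach_couple jY jY'" and "bounded_linear A"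
    and "\<And>x. jX x \<in> range jX' \<Longrightarrow> jY (A x) \<in> range jY'"
  obtains K where "K \<ge> 0"
    and "\<And>x x'. jX x = jX' x' \<Longrightarrow> norm (inv jY' (jY (A x))) \<le> K * (norm x + norm x')"
proof -
  obtain K where "K \<ge> 0"
    and K: "\<And>p. jX (fst p) = jX' (snd p) \<Longrightarrow> norm (inv jY' (jY (A (fst p)))) \<le> K * norm p"
    using linear_closed_graph_on.closed_graph_theorem[OF linear_closed_graph_on_intersection[OF assms]]
    by auto
  have "norm (inv jY' (jY (A x))) \<le> K * (norm x + norm x')" if "jX x = jX' x'" for x x'
  proof -
    have "norm (inv jY' (jY (A x))) \<le> K * norm (x, x')"
      using K[of "(x, x')"] that by simp
    also have "\<dots> \<le> K * (norm x + norm x')"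
      using norm_Pair_le \<open>K \<ge> 0\<close> by (rule mult_left_mono)
    finally show ?thesis .
  qed
  with \<open>K \<ge> 0\<close> show thesis
    by (rule that)
qed

lemma no_adversarial_sequence_if_bounded_on_intersection:
  fixes jX :: "'x::banach \<Rightarrow> 'v" and jX' :: "'x2::banach \<Rightarrow> 'v"
    and jY :: "'y::banach \<Rightarrow> 'w" and jY' :: "'y2::banach \<Rightarrow> 'w" and A :: "'x \<Rightarrow> 'y"
  assumes "\<And>x. jX x \<in> range jX' \<Longrightarrow> jY (A x) \<in> range jY'"
    and "\<And>x x'. jX x = jX' x' \<Longrightarrow> norm (inv jY' (jY (A x))) \<le> K * (norm x + norm x')"
    and "K \<ge> 0"
  shows "\<not> adversarial_sequence jX jX' jY jY' A r"
proof
  assume "adversarial_sequence jX jX' jY jY' A r"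
  then obtain C C' where r_in: "\<And>n. jX (r n) \<in> range jX'" and C: "\<And>n. norm (r n) \<le> C"
    and C': "\<And>n. emb_norm jX' (jX (r n)) \<le> ereal C'"
    and unbounded: "(SUP n. emb_norm jY' (jY (A (r n)))) = \<infinity>"
    unfolding adversarial_sequence_def by blast
  have "emb_norm jY' (jY (A (r n))) \<le> ereal (K * (C + C'))" for n
  proof -
    define x' where "x' = inv jX' (jX (r n))"
    have "jX (r n) = jX' x'"
      using r_in[of n] by (simp add: x'_def f_inv_into_f)
    moreover have "norm x' \<le> C'"
      using C'[of n] r_in[of n] by (simp add: x'_def emb_norm_of_range)
    ultimately have "norm (inv jY' (jY (A (r n)))) \<le> K * (C + C')"
      using assms(2)[of "r n" x'] mult_left_mono[OF add_mono[OF C[of n]] \<open>K \<ge> 0\<close>] by fastforce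
    then show ?thesis
      using assms(1) r_in by (simp add: emb_norm_of_range)
  qed
  then have "(SUP n. emb_norm jY' (jY (A (r n)))) \<le> ereal (K * (C + C'))"
    by (rule SUP_least)
  with unbounded show False
    by simp
qed

theorem theorem2p3:
  fixes jX :: "'x::banach \<Rightarrow> 'v::{real_vector,t2_space}"
    and jX' :: "'x2::banach \<Rightarrow> 'v"
    and jY :: "'y::banach \<Rightarrow> 'w::{real_vector,t2_space}"
    and jY' :: "'y2::banach \<Rightarrow> 'w"
    and A :: "'x \<Rightarrow> 'y"
  assumes "banach_couple jX jX'"
    and "banach_couple jY jY'"
    and "bounded_linear A"
    and "\<exists>r. adversarial_sequence jX jX' jY jY' A r"
  shows "\<exists>r. adversarial_perturbation jX jX' jY jY' A r"
proof (rule ccontr)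
  assume "\<nexists>r. adversarial_perturbation jX jX' jY jY' A r"
  then have no_perturbation: "\<And>x. jX x \<in> range jX' \<Longrightarrow> jY (A x) \<in> range jY'"
    unfolding adversarial_perturbation_def by blast
  then obtain K where "K \<ge> 0"
    and K: "\<And>x x'. jX x = jX' x' \<Longrightarrow> norm (inv jY' (jY (A x))) \<le> K * (norm x + norm x')"
    using bounded_on_intersection_if_no_adversarial_perturbation[OF assms(1-3)] by metis
  have "\<not> adversarial_sequence jX jX' jY jY' A r" for r
    by (rule no_adversarial_sequence_if_bounded_on_intersection) (fact no_perturbation K \<open>K \<ge> 0\<close>)+
  with assms(4) show False
    by blast
qed

end
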